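(* Let $\mathcal{R}\subseteq\mathbb{R}^{\mathcal{S}\times\mathcal{A}}$ be a nonempty compact, not necessarily $s$-rectangular, reward uncertainty set, and let $C(\mathcal{R})=\bigcap\{\mathcal{R}^{\texttt{s}} : \mathcal{R}^{\texttt{s}} \text{ is } s\text{-rectangular and } \mathcal{R}\subseteq\mathcal{R}^{\texttt{s}}\}$ be the smallest $s$-rectangular set containing $\mathcal{R}$. Then for every stationary policy $\pi\in\Pi$, the robust value function $v^\pi_{C(\mathcal{R})}$ is a fixed point of the robust Bellman evaluation operator $\mathcal{T}^\pi_{\mathcal{R}}$, and the optimal robust value function $v^*_{C(\mathcal{R})}$ is a fixed point of the robust Bellman optimality operator $\mathcal{T}^*_{\mathcal{R}}$.
   Context: Finite MDP: finite state space $\mathcal{S}$, finite action space $\mathcal{A}$, transition kernel $P(\cdot|s,a)\in\Delta_{\mathcal{S}}$, discount factor $\gamma\in[0,1)$. $\Pi$ is the set of stationary randomized policies $\pi:\mathcal{S}\to\Delta_{\mathcal{A}}$, written $\pi_s(a)=\pi(a|s)$. For a reward $R\in\mathbb{R}^{\mathcal{S}\times\mathcal{A}}$ let $R^\pi(s)=\sum_a\pi_s(a)R(s,a)$, $P^\pi(s'|s)=\sum_a\pi_s(a)P(s'|s,a)$, $v^\pi_R=(I-\gamma P^\pi)^{-1}R^\pi$ and $(\mathcal{T}^\pi_R v)(s)=R^\pi(s)+\gamma\sum_{s'}P^\pi(s'|s)v(s')$. A set $\mathcal{R}'\subseteq\mathbb{R}^{\mathcal{S}\times\mathcal{A}}$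 is $s$-rectangular if $\mathcal{R}'=\times_{s\in\mathcal{S}}\mathcal{R}'_s$ with $\mathcal{R}'_s\subseteq\mathbb{R}^{\mathcal{A}}$ (i.e. the rows $R(s,\cdot)$ can be chosen independently across states). Robust Bellman evaluation operator: $(\mathcal{T}^\pi_{\mathcal{R}}v)(s)=\min_{R\in\mathcal{R}}(\mathcal{T}^\pi_R v)(s)$ for each $s$; robust Bellman optimality operator: $(\mathcal{T}^*_{\mathcal{R}}v)(s)=\max_{\pi\in\Pi}(\mathcal{T}^\pi_{\mathcal{R}}v)(s)$. For a compact $s$-rectangular set $\mathcal{R}'$, the robust value function is $v^\pi_{\mathcal{R}'}(s)=\min_{R\in\mathcal{R}'}v^\pi_R(s)$ and the optimal robust value function is $v^*_{\mathcal{R}'}(s)=\max_{\pi\in\Pi}v^\pi_{\mathcal{R}'}(s)$. *)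

theory Defs
  imports "HOL-Analysis.Analysis"
begin

text \<open>A reward R is a matrix
  real^'a^'s with R$s$a = R(s,a); a policy pol is real^'a^'s with pol$s$a = pol(a|s);
  the transition kernel is P :: 's => 'a => real^'s with (P s a)$s' = P(s'|s,a).\<close>

definition stochastic_kernel :: "('s::finite \<Rightarrow> 'a::finite \<Rightarrow> real^'s) \<Rightarrow> bool" where
  "stochastic_kernel P \<longleftrightarrow> (\<forall>s a. (\<forall>s'. P s a $ s' \<ge> 0) \<and> (\<Sum>s'\<in>UNIV. P s a $ s') = 1)"

definition policies :: "(real^'a::finite^'s::finite) set" where
  "policies = {pol. (\<forall>s a. pol $ s $ a \<ge> 0) \<and> (\<forall>s. (\<Sum>a\<in>UNIV. pol $ s $ a) = 1)}"

definition Rpol :: "real^'a::finite^'s::finite \<Rightarrow> real^'a^'s \<Rightarrow> real^'s" where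
  "Rpol pol R = (\<chi> s. \<Sum>a\<in>UNIV. pol $ s $ a * R $ s $ a)"

definition Ppol :: "('s::finite \<Rightarrow> 'a::finite \<Rightarrow> real^'s) \<Rightarrow> real^'a^'s \<Rightarrow> real^'s^'s" where
  "Ppol P pol = (\<chi> s s'. \<Sum>a\<in>UNIV. pol $ s $ a * P s a $ s')"

definition vpol :: "('s::finite \<Rightarrow> 'a::finite \<Rightarrow> real^'s) \<Rightarrow> real \<Rightarrow> real^'a^'s \<Rightarrow> real^'a^'s \<Rightarrow> real^'s" where
  "vpol P \<gamma> pol R = matrix_inv (mat 1 - \<gamma> *\<^sub>R Ppol P pol) *v Rpol pol R"

definition Tpol :: "('s::finite \<Rightarrow> 'a::finite \<Rightarrow> real^'s) \<Rightarrow> real \<Rightarrow> real^'a^'s \<Rightarrow> real^'a^'s \<Rightarrow> real^'s \<Rightarrow> real^'s" where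
  "Tpol P \<gamma> pol R v = Rpol pol R + \<gamma> *\<^sub>R (Ppol P pol *v v)"

definition Trob :: "('s::finite \<Rightarrow> 'a::finite \<Rightarrow> real^'s) \<Rightarrow> real \<Rightarrow> (real^'a^'s) set \<Rightarrow> real^'a^'s \<Rightarrow> real^'s \<Rightarrow> real^'s" where
  "Trob P \<gamma> RR pol v = (\<chi> s. INF R\<in>RR. Tpol P \<gamma> pol R v $ s)"

definition Topt :: "('s::finite \<Rightarrow> 'a::finite \<Rightarrow> real^'s) \<Rightarrow> real \<Rightarrow> (real^'a^'s) set \<Rightarrow> real^'s \<Rightarrow> real^'s" where
  "Topt P \<gamma> RR v = (\<chi> s. SUP pol\<in>policies. Trob P \<gamma> RR pol v $ s)"

definition s_rectangular :: "(real^'a::finite^'s::finite) set \<Rightarrow> bool" where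
  "s_rectangular RR \<longleftrightarrow> (\<exists>Rs :: 's \<Rightarrow> (real^'a) set. RR = {R. \<forall>s. R $ s \<in> Rs s})"

definition rect_hull :: "(real^'a::finite^'s::finite) set \<Rightarrow> (real^'a^'s) set" where
  "rect_hull RR = \<Inter> {RS. s_rectangular RS \<and> RR \<subseteq> RS}"

definition vrob :: "('s::finite \<Rightarrow> 'a::finite \<Rightarrow> real^'s) \<Rightarrow> real \<Rightarrow> (real^'a^'s) set \<Rightarrow> real^'a^'s \<Rightarrow> real^'s" where
  "vrob P \<gamma> RR pol = (\<chi> s. INF R\<in>RR. vpol P \<gamma> pol R $ s)"

definition vopt :: "('s::finite \<Rightarrow> 'a::finite \<Rightarrow> real^'s) \<Rightarrow> real \<Rightarrow> (real^'a^'s) set \<Rightarrow> real^'s" where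
  "vopt P \<gamma> RR = (\<chi> s. SUP pol\<in>policies. vrob P \<gamma> RR pol $ s)"

end

theory Submission
  imports Defs
begin

(* Fix pol and build a reward R* row by row: row s is the row s of some element of RR minimising
   the expected reward of pol in state s. The s-rectangular hull consists exactly of the matrices
   whose rows are rows of elements of RR, so R* lies in it and is worst in every state at once;
   since v^pol is monotone in the expected reward, the robust value over the hull is v^pol of R*.
   The robust operator over RR is the ordinary Bellman operator of R*, whose fixed point is that
   value. For the optimality operator, V = sup_pol v^pol satisfies V <= T* V by monotonicity.
   Conversely T^pol v depends on pol only row by row, so eps-optimal rows glue into a single
   policy, and the discounted comparison principle bounds T* V - V by eps / (1 - gamma). *)

definition row_stochastic :: "real^'n::finite^'m::finite \<Rightarrow> bool" where
  "row_stochastic Q \<longleftrightarrow> (\<forall>s t. 0 \<le> Q $ s $ t) \<and> (\<forall>s. (\<Sum>t\<in>UNIV. Q $ s $ t) = 1)"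

lemma row_stochastic_Ppol:
  assumes "stochastic_kernel P" "pol \<in> policies"
  shows "row_stochastic (Ppol P pol)"
proof -
  have "(\<Sum>s'\<in>UNIV. Ppol P pol $ s $ s') = (\<Sum>a\<in>UNIV. pol $ s $ a * (\<Sum>s'\<in>UNIV. P s a $ s'))" for s
    unfolding Ppol_def by (simp add: sum_distrib_left) (rule sum.swap)
  with assms show ?thesis
    unfolding row_stochastic_def stochastic_kernel_def policies_def
    by (simp add: Ppol_def sum_nonneg)
qed

lemma row_stochastic_mult_lower_bound:
  assumes "row_stochastic Q" "\<And>t. c \<le> d $ t"
  shows "c \<le> (Q *v d) $ s"
proof -
  have "c = (\<Sum>t\<in>UNIV. Q $ s $ t * c)"
    using assms(1) by (simp add: row_stochastic_def sum_distrib_right[symmetric])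
  also have "\<dots> \<le> (\<Sum>t\<in>UNIV. Q $ s $ t * d $ t)"
    using assms by (intro sum_mono) (simp add: row_stochastic_def mult_left_mono)
  also have "\<dots> = (Q *v d) $ s"
    by (simp add: matrix_vector_mult_def)
  finally show ?thesis .
qed

lemma row_stochastic_mult_upper_bound:
  assumes "row_stochastic Q" "\<And>t. d $ t \<le> c"
  shows "(Q *v d) $ s \<le> c"
  using row_stochastic_mult_lower_bound[OF assms(1), of "- c" "- d" s] assms(2)
  by (simp add: vec.neg)

lemma discounted_min_principle:
  fixes Q :: "real^'n::finite^'n"
  assumes "row_stochastic Q" "0 \<le> \<gamma>" "\<gamma> < 1" "\<And>t. c + \<gamma> * (Q *v d) $ t \<le> d $ t"
  shows "c / (1 - \<gamma>) \<le> d $ s"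
proof -
  have "Min (range (($) d)) \<in> range (($) d)"
    by (rule Min_in) auto
  then obtain s0 where "d $ s0 = Min (range (($) d))"
    by (metis rangeE)
  then have min: "d $ s0 \<le> d $ t" for t
    by simp
  have "c + \<gamma> * d $ s0 \<le> c + \<gamma> * (Q *v d) $ s0"
    using row_stochastic_mult_lower_bound[OF assms(1) min] assms(2) by (simp add: mult_left_mono)
  also have "\<dots> \<le> d $ s0"
    by (rule assms(4))
  finally have "c / (1 - \<gamma>) \<le> d $ s0"
    using assms(3) by (simp add: field_simps)
  with min[of s] show ?thesis
    by linarith
qed

lemma discounted_max_principle:
  fixes Q :: "real^'n::finite^'n"
  assumes "row_stochastic Q" "0 \<le> \<gamma>" "\<gamma> < 1" "\<And>t. d $ t \<le> c + \<gamma> * (Q *v d) $ t"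
  shows "d $ s \<le> c / (1 - \<gamma>)"
proof -
  have "- c + \<gamma> * (Q *v - d) $ t \<le> (- d) $ t" for t
    using assms(4)[of t] by (simp add: vec.neg)
  from discounted_min_principle[OF assms(1-3) this, of s] show ?thesis
    by simp
qed

lemma invertible_discounted:
  fixes Q :: "real^'n::finite^'n"
  assumes "row_stochastic Q" "0 \<le> \<gamma>" "\<gamma> < 1"
  shows "invertible (mat 1 - \<gamma> *\<^sub>R Q)"
proof -
  have "x = 0" if "(mat 1 - \<gamma> *\<^sub>R Q) *v x = 0" for x
  proof -
    have fixpoint: "x $ t = \<gamma> * (Q *v x) $ t" for t
      using that by (simp add: vec_eq_iff matrix_vector_mult_diff_rdistrib
          scaleR_matrix_vector_assoc[symmetric])
    have "0 / (1 - \<gamma>) \<le> x $ t" for t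
      using fixpoint by (intro discounted_min_principle[OF assms]) simp
    moreover have "x $ t \<le> 0 / (1 - \<gamma>)" for t
      using fixpoint by (intro discounted_max_principle[OF assms]) simp
    ultimately show ?thesis
      by (simp add: vec_eq_iff order_antisym)
  qed
  then show ?thesis
    unfolding invertible_left_inverse matrix_left_invertible_ker by blast
qed

lemma Tpol_cong_row:
  "pol $ s = pol' $ s \<Longrightarrow> R $ s = R' $ s \<Longrightarrow> Tpol P \<gamma> pol R v $ s = Tpol P \<gamma> pol' R' v $ s"
  by (simp add: Tpol_def Rpol_def Ppol_def matrix_vector_mult_def)

lemma Trob_cong_row:
  "pol $ s = pol' $ s \<Longrightarrow> Trob P \<gamma> RR pol v $ s = Trob P \<gamma> RR pol' v $ s"
  unfolding Trob_def using Tpol_cong_row[of pol s pol'] by simp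

lemma Rpol_le_norm:
  assumes "pol \<in> policies"
  shows "Rpol pol R $ s \<le> norm R"
proof -
  have "R $ s $ a \<le> norm R" for a
    using abs_ge_self[of "R $ s $ a"] component_le_norm_cart[of "R $ s" a]
      Finite_Cartesian_Product.norm_nth_le[of R s]
    by linarith
  then have "(\<Sum>a\<in>UNIV. pol $ s $ a * R $ s $ a) \<le> (\<Sum>a\<in>UNIV. pol $ s $ a * norm R)"
    using assms by (intro sum_mono mult_left_mono) (auto simp: policies_def)
  then show ?thesis
    using assms by (simp add: Rpol_def policies_def sum_distrib_right[symmetric])
qed

lemma policies_nonempty: "policies \<noteq> {}"
proof -
  have "(\<chi> s a. 1 / real CARD('a)) \<in> (policies :: (real^'a::finite^'s::finite) set)"
    unfolding policies_def by simp
  then show ?thesis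
    by blast
qed

lemma policies_glue_rows:
  assumes "\<And>t. pf t \<in> policies"
  shows "(\<chi> t. pf t $ t) \<in> policies"
  using assms unfolding policies_def by simp

lemma rect_hull_eq: "rect_hull RR = {R. \<forall>s. \<exists>R'\<in>RR. R $ s = R' $ s}"
proof
  let ?H = "{R. \<forall>s. R $ s \<in> (\<lambda>R. R $ s) ` RR}"
  have "s_rectangular ?H"
    unfolding s_rectangular_def by (rule exI[of _ "\<lambda>s. (\<lambda>R. R $ s) ` RR"]) (rule refl)
  moreover have "RR \<subseteq> ?H"
    by auto
  ultimately have "rect_hull RR \<subseteq> ?H"
    unfolding rect_hull_def by (intro Inter_lower) simp
  then show "rect_hull RR \<subseteq> {R. \<forall>s. \<exists>R'\<in>RR. R $ s = R' $ s}"
    by (auto simp: image_iff)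
  show "{R. \<forall>s. \<exists>R'\<in>RR. R $ s = R' $ s} \<subseteq> rect_hull RR"
    unfolding rect_hull_def s_rectangular_def
  proof (intro subsetI InterI)
    fix R RS
    assume R: "R \<in> {R. \<forall>s. \<exists>R'\<in>RR. R $ s = R' $ s}"
      and "RS \<in> {RS. (\<exists>Rs. RS = {R. \<forall>s. R $ s \<in> Rs s}) \<and> RR \<subseteq> RS}"
    then obtain Rs where RS: "RS = {R. \<forall>s. R $ s \<in> Rs s}" and "RR \<subseteq> RS"
      by blast
    then have rows: "R' $ s \<in> Rs s" if "R' \<in> RR" for R' s
      using that by blast
    show "R \<in> RS"
      unfolding RS
    proof (intro CollectI allI)
      fix s
      from R obtain R' where "R' \<in> RR" "R $ s = R' $ s"
        by blast
      with rows show "R $ s \<in> Rs s"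
        by simp
    qed
  qed
qed

lemma subset_rect_hull: "RR \<subseteq> rect_hull RR"
  unfolding rect_hull_def by (rule Inter_greatest) simp

definition worst_reward :: "(real^'a::finite^'s::finite) set \<Rightarrow> real^'a^'s \<Rightarrow> real^'a^'s" where
  "worst_reward RR pol =
     (\<chi> s. (SOME R. R \<in> RR \<and> (\<forall>R'\<in>RR. Rpol pol R $ s \<le> Rpol pol R' $ s)) $ s)"

lemma worst_reward_row:
  assumes "compact RR" "RR \<noteq> {}"
  shows "\<exists>R\<in>RR. worst_reward RR pol $ s = R $ s \<and> (\<forall>R'\<in>RR. Rpol pol R $ s \<le> Rpol pol R' $ s)"
proof -
  let ?minimal = "\<lambda>R. R \<in> RR \<and> (\<forall>R'\<in>RR. Rpol pol R $ s \<le> Rpol pol R' $ s)"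
  have "continuous_on RR (\<lambda>R. Rpol pol R $ s)"
    unfolding Rpol_def by simp (intro continuous_intros)
  then have "\<exists>R. ?minimal R"
    using continuous_attains_inf[OF assms] by blast
  then have "?minimal (SOME R. ?minimal R)"
    by (rule someI_ex)
  then show ?thesis
    unfolding worst_reward_def by auto
qed

lemma Trob_eq_Tpol_worst_reward:
  assumes "compact RR" "RR \<noteq> {}"
  shows "Trob P \<gamma> RR pol v = Tpol P \<gamma> pol (worst_reward RR pol) v"
proof -
  have "(INF R\<in>RR. Tpol P \<gamma> pol R v $ s) = Tpol P \<gamma> pol (worst_reward RR pol) v $ s" for s
  proof -
    obtain R where R: "R \<in> RR" "worst_reward RR pol $ s = R $ s"
      "\<forall>R'\<in>RR. Rpol pol R $ s \<le> Rpol pol R' $ s"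
      using worst_reward_row[OF assms] by blast
    have "(INF R\<in>RR. Tpol P \<gamma> pol R v $ s) = Tpol P \<gamma> pol R v $ s"
      using R by (intro cInf_eq_minimum) (auto simp: Tpol_def)
    also have "\<dots> = Tpol P \<gamma> pol (worst_reward RR pol) v $ s"
      using R(2) by (intro Tpol_cong_row) simp_all
    finally show ?thesis .
  qed
  then show ?thesis
    by (simp add: Trob_def vec_eq_iff)
qed

lemma Rpol_worst_reward_le:
  assumes "compact RR" "RR \<noteq> {}" "R \<in> rect_hull RR"
  shows "Rpol pol (worst_reward RR pol) $ s \<le> Rpol pol R $ s"
proof -
  obtain R' where "R' \<in> RR" "R $ s = R' $ s"
    using assms(3) by (auto simp: rect_hull_eq)
  moreover obtain R0 where "worst_reward RR pol $ s = R0 $ s"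
    "\<forall>R'\<in>RR. Rpol pol R0 $ s \<le> Rpol pol R' $ s"
    using worst_reward_row[OF assms(1,2)] by blast
  ultimately show ?thesis
    by (simp add: Rpol_def)
qed

lemma worst_reward_in_rect_hull:
  assumes "compact RR" "RR \<noteq> {}"
  shows "worst_reward RR pol \<in> rect_hull RR"
  unfolding rect_hull_eq using worst_reward_row[OF assms] by blast

lemma Trob_diff:
  assumes "compact RR" "RR \<noteq> {}"
  shows "Trob P \<gamma> RR pol v $ s - Trob P \<gamma> RR pol w $ s = \<gamma> * (Ppol P pol *v (v - w)) $ s"
  by (simp add: Trob_eq_Tpol_worst_reward[OF assms] Tpol_def
      matrix_vector_mult_diff_distrib algebra_simps)

lemma Rpol_worst_reward_bounded:
  assumes "compact RR" "RR \<noteq> {}"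
  shows "\<exists>c. \<forall>pol\<in>policies. \<forall>t. Rpol pol (worst_reward RR pol) $ t \<le> c"
proof -
  obtain R0 where R0: "R0 \<in> rect_hull RR"
    using assms(2) subset_rect_hull by blast
  have "Rpol pol (worst_reward RR pol) $ t \<le> norm R0" if "pol \<in> policies" for pol t
    using Rpol_worst_reward_le[OF assms R0, of pol t] Rpol_le_norm[OF that, of R0 t]
    by linarith
  then show ?thesis
    by blast
qed

context
  fixes P :: "'s::finite \<Rightarrow> 'a::finite \<Rightarrow> real^'s" and \<gamma> :: real
  assumes kernel: "stochastic_kernel P" and discount: "0 \<le> \<gamma>" "\<gamma> < 1"
begin

lemma vpol_fixpoint:
  assumes "pol \<in> policies"
  shows "Tpol P \<gamma> pol R (vpol P \<gamma> pol R) = vpol P \<gamma> pol R"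
proof -
  define M where "M = mat 1 - \<gamma> *\<^sub>R Ppol P pol"
  have "invertible M"
    unfolding M_def using row_stochastic_Ppol[OF kernel assms] discount
    by (rule invertible_discounted)
  then have "M ** matrix_inv M = mat 1"
    unfolding invertible_def matrix_inv_def by (rule someI2_ex) blast
  then have "M *v vpol P \<gamma> pol R = Rpol pol R"
    unfolding vpol_def M_def[symmetric] by (simp add: matrix_vector_mul_assoc)
  then show ?thesis
    unfolding M_def Tpol_def
    by (simp add: matrix_vector_mult_diff_rdistrib scaleR_matrix_vector_assoc algebra_simps)
qed

lemma vpol_component:
  "pol \<in> policies \<Longrightarrow>
   vpol P \<gamma> pol R $ s = Rpol pol R $ s + \<gamma> * (Ppol P pol *v vpol P \<gamma> pol R) $ s"
  using vpol_fixpoint[symmetric, of pol R] by (simp add: Tpol_def vec_eq_iff)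

lemma vpol_mono_reward:
  assumes "pol \<in> policies" "\<And>t. Rpol pol R $ t \<le> Rpol pol R' $ t"
  shows "vpol P \<gamma> pol R $ s \<le> vpol P \<gamma> pol R' $ s"
proof -
  define d where "d = vpol P \<gamma> pol R' - vpol P \<gamma> pol R"
  have "0 + \<gamma> * (Ppol P pol *v d) $ t \<le> d $ t" for t
    using vpol_component[OF assms(1), of R t] vpol_component[OF assms(1), of R' t] assms(2)[of t]
    by (simp add: d_def matrix_vector_mult_diff_distrib algebra_simps)
  from discounted_min_principle[OF row_stochastic_Ppol[OF kernel assms(1)] discount this]
  show ?thesis
    by (simp add: d_def)
qed

lemma vpol_upper_bound:
  assumes "pol \<in> policies" "\<And>t. Rpol pol R $ t \<le> c"
  shows "vpol P \<gamma> pol R $ s \<le> c / (1 - \<gamma>)"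
proof (rule discounted_max_principle[OF row_stochastic_Ppol[OF kernel assms(1)] discount])
  show "vpol P \<gamma> pol R $ t \<le> c + \<gamma> * (Ppol P pol *v vpol P \<gamma> pol R) $ t" for t
    using vpol_component[OF assms(1), of R t] assms(2)[of t] by linarith
qed

context
  fixes RR :: "(real^'a^'s) set"
  assumes nonempty: "RR \<noteq> {}" and compact: "compact RR"
begin

lemma vrob_rect_hull_eq:
  assumes "pol \<in> policies"
  shows "vrob P \<gamma> (rect_hull RR) pol = vpol P \<gamma> pol (worst_reward RR pol)"
proof -
  have "(INF R\<in>rect_hull RR. vpol P \<gamma> pol R $ s) = vpol P \<gamma> pol (worst_reward RR pol) $ s" for s
    using worst_reward_in_rect_hull[OF compact nonempty]
      vpol_mono_reward[OF assms Rpol_worst_reward_le[OF compact nonempty]]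
    by (intro cInf_eq_minimum) auto
  then show ?thesis
    by (simp add: vrob_def vec_eq_iff)
qed

lemma Trob_fixpoint_vrob_rect_hull:
  assumes "pol \<in> policies"
  shows "Trob P \<gamma> RR pol (vrob P \<gamma> (rect_hull RR) pol) = vrob P \<gamma> (rect_hull RR) pol"
  using vpol_fixpoint[OF assms]
  by (simp add: vrob_rect_hull_eq[OF assms] Trob_eq_Tpol_worst_reward[OF compact nonempty])

lemma bdd_above_vrob_rect_hull: "bdd_above ((\<lambda>pol. vrob P \<gamma> (rect_hull RR) pol $ s) ` policies)"
proof -
  obtain c where "\<forall>pol\<in>policies. \<forall>t. Rpol pol (worst_reward RR pol) $ t \<le> c"
    using Rpol_worst_reward_bounded[OF compact nonempty] by blast
  then have "vrob P \<gamma> (rect_hull RR) pol $ s \<le> c / (1 - \<gamma>)" if "pol \<in> policies" for pol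
    using vpol_upper_bound[OF that] that by (simp add: vrob_rect_hull_eq[OF that])
  then show ?thesis
    by (intro bdd_aboveI2)
qed

lemma bdd_above_Trob: "bdd_above ((\<lambda>pol. Trob P \<gamma> RR pol v $ s) ` policies)"
proof -
  obtain c where c: "\<forall>pol\<in>policies. \<forall>t. Rpol pol (worst_reward RR pol) $ t \<le> c"
    using Rpol_worst_reward_bounded[OF compact nonempty] by blast
  have "Trob P \<gamma> RR pol v $ s \<le> c + \<gamma> * norm v" if pol: "pol \<in> policies" for pol
  proof -
    have "v $ t \<le> norm v" for t
      using abs_ge_self[of "v $ t"] component_le_norm_cart[of v t] by linarith
    then have "(Ppol P pol *v v) $ s \<le> norm v"
      by (rule row_stochastic_mult_upper_bound[OF row_stochastic_Ppol[OF kernel pol]])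
    then have "\<gamma> * (Ppol P pol *v v) $ s \<le> \<gamma> * norm v"
      using discount(1) by (rule mult_left_mono)
    moreover have "Rpol pol (worst_reward RR pol) $ s \<le> c"
      using c pol by blast
    ultimately show ?thesis
      by (simp add: Trob_eq_Tpol_worst_reward[OF compact nonempty] Tpol_def)
  qed
  then show ?thesis
    by (intro bdd_aboveI2)
qed

lemma vrob_rect_hull_le_vopt:
  "pol \<in> policies \<Longrightarrow> vrob P \<gamma> (rect_hull RR) pol $ s \<le> vopt P \<gamma> (rect_hull RR) $ s"
  unfolding vopt_def vec_lambda_beta by (rule cSUP_upper[OF _ bdd_above_vrob_rect_hull])

lemma vopt_rect_hull_le_Topt:
  "vopt P \<gamma> (rect_hull RR) $ s \<le> Topt P \<gamma> RR (vopt P \<gamma> (rect_hull RR)) $ s"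
proof -
  let ?V = "vopt P \<gamma> (rect_hull RR)"
  have "vrob P \<gamma> (rect_hull RR) pol $ s \<le> Topt P \<gamma> RR ?V $ s" if pol: "pol \<in> policies" for pol
  proof -
    let ?W = "vrob P \<gamma> (rect_hull RR) pol"
    have "0 \<le> \<gamma> * (Ppol P pol *v (?V - ?W)) $ s"
      using discount(1) vrob_rect_hull_le_vopt[OF pol]
      by (intro mult_nonneg_nonneg
          row_stochastic_mult_lower_bound[OF row_stochastic_Ppol[OF kernel pol]]) simp_all
    moreover have "Trob P \<gamma> RR pol ?V $ s - ?W $ s = \<gamma> * (Ppol P pol *v (?V - ?W)) $ s"
      using Trob_diff[OF compact nonempty, of P \<gamma> pol ?V s ?W]
      by (simp add: Trob_fixpoint_vrob_rect_hull[OF pol])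
    ultimately have "?W $ s \<le> Trob P \<gamma> RR pol ?V $ s"
      by linarith
    also have "\<dots> \<le> Topt P \<gamma> RR ?V $ s"
      unfolding Topt_def vec_lambda_beta by (rule cSUP_upper[OF pol bdd_above_Trob])
    finally show ?thesis .
  qed
  then have "(SUP pol\<in>policies. vrob P \<gamma> (rect_hull RR) pol $ s) \<le> Topt P \<gamma> RR ?V $ s"
    by (rule cSUP_least[OF policies_nonempty])
  then show ?thesis
    by (simp add: vopt_def[of P \<gamma> "rect_hull RR"])
qed

lemma Topt_near_optimal_policy:
  assumes "0 < \<epsilon>"
  obtains pol where "pol \<in> policies" "\<And>t. Topt P \<gamma> RR v $ t - \<epsilon> < Trob P \<gamma> RR pol v $ t"
proof -
  have "\<exists>pol\<in>policies. Topt P \<gamma> RR v $ t - \<epsilon> < Trob P \<gamma> RR pol v $ t" for t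
    using less_cSUP_iff[OF policies_nonempty bdd_above_Trob, of "Topt P \<gamma> RR v $ t - \<epsilon>" v t]
      assms
    by (simp add: Topt_def)
  then obtain pf where pf: "\<And>t. pf t \<in> policies"
    "\<And>t. Topt P \<gamma> RR v $ t - \<epsilon> < Trob P \<gamma> RR (pf t) v $ t"
    by metis
  have "Trob P \<gamma> RR (pf t) v $ t = Trob P \<gamma> RR (\<chi> t. pf t $ t) v $ t" for t
    by (rule Trob_cong_row) simp
  with pf show ?thesis
    by (intro that[OF policies_glue_rows[OF pf(1)]]) auto
qed

lemma Topt_le_vopt_rect_hull:
  "Topt P \<gamma> RR (vopt P \<gamma> (rect_hull RR)) $ s \<le> vopt P \<gamma> (rect_hull RR) $ s"
proof (rule field_le_epsilon)
  let ?V = "vopt P \<gamma> (rect_hull RR)"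
  let ?U = "Topt P \<gamma> RR ?V"
  fix e :: real
  assume "0 < e"
  then have "0 < e * (1 - \<gamma>)"
    using discount by simp
  then obtain pol where pol: "pol \<in> policies"
    and near: "\<And>t. ?U $ t - e * (1 - \<gamma>) < Trob P \<gamma> RR pol ?V $ t"
    using Topt_near_optimal_policy[where v = ?V] by blast
  let ?W = "vrob P \<gamma> (rect_hull RR) pol"
  let ?Q = "Ppol P pol"
  have diff: "?W $ t - Trob P \<gamma> RR pol ?V $ t = \<gamma> * (?Q *v (?W - ?V)) $ t" for t
    using Trob_diff[OF compact nonempty, of P \<gamma> pol ?W t ?V] Trob_fixpoint_vrob_rect_hull[OF pol]
    by simp
  have "- e * (1 - \<gamma>) + \<gamma> * (?Q *v (?W - ?V)) $ t \<le> (?W - ?V) $ t" for t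
    using diff[of t] near[of t] vopt_rect_hull_le_Topt[of t] by simp
  then have "- e * (1 - \<gamma>) / (1 - \<gamma>) \<le> (?W - ?V) $ t" for t
    by (rule discounted_min_principle[OF row_stochastic_Ppol[OF kernel pol] discount])
  then have "- e \<le> (?Q *v (?W - ?V)) $ s"
    using discount
    by (intro row_stochastic_mult_lower_bound[OF row_stochastic_Ppol[OF kernel pol]]) simp
  then have "\<gamma> * (- e) \<le> \<gamma> * (?Q *v (?W - ?V)) $ s"
    using discount(1) by (rule mult_left_mono)
  moreover have "e * (1 - \<gamma>) + \<gamma> * e = e"
    by (simp add: algebra_simps)
  (* U - e (1 - gamma) < T^pol V = W - gamma Q (W - V) <= V + gamma e *)
  ultimately show "?U $ s \<le> ?V $ s + e"
    using near[of s] diff[of s] vrob_rect_hull_le_vopt[OF pol, of s] by simp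
qed

lemma Topt_fixpoint_vopt_rect_hull:
  "Topt P \<gamma> RR (vopt P \<gamma> (rect_hull RR)) = vopt P \<gamma> (rect_hull RR)"
  using Topt_le_vopt_rect_hull vopt_rect_hull_le_Topt by (simp add: vec_eq_iff order_antisym)

end

end

theorem proposition1:
  fixes P :: "'s::finite \<Rightarrow> 'a::finite \<Rightarrow> real^'s"
    and \<gamma> :: real
    and RR :: "(real^'a^'s) set"
  assumes "stochastic_kernel P"
    and "0 \<le> \<gamma>" and "\<gamma> < 1"
    and "RR \<noteq> {}" and "compact RR"
  shows "(\<forall>pol\<in>policies. Trob P \<gamma> RR pol (vrob P \<gamma> (rect_hull RR) pol) = vrob P \<gamma> (rect_hull RR) pol)
         \<and> Topt P \<gamma> RR (vopt P \<gamma> (rect_hull RR)) = vopt P \<gamma> (rect_hull RR)"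
  using Trob_fixpoint_vrob_rect_hull[OF assms] Topt_fixpoint_vopt_rect_hull[OF assms] by blast

end
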